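(* In the $q_n$ case with $n=2m$ even ($m\ge 2$), at every point of $\Sigma$ $$h_k^{-1}h_{k+1}\ \ge\ \big(km-\tfrac12 k^2\big)g_0\quad(1\le k\le m-1),\qquad h_m^{-2}\ \ge\ \tfrac12 m^2 g_0 .$$ Moreover, if any one of these inequalities is an equality at a single point of $\Sigma$, then $q_n\equiv 0$.
   Context: Let $\Sigma$ be a closed Riemann surface of genus $\ge 2$ with canonical bundle $K$; $z$ is a local holomorphic coordinate and $\Delta=\partial_z\partial_{\bar z}$. A Hermitian metric on $K^{-l}$ is written locally as $h\,dz^l d\bar z^l$ and identified with the positive local function $h$; inequalities between sections of the same bundle $(K\otimes\bar K)^s$ mean inequalities of local coefficient functions. $g_0$ is the hyperbolic (curvature $-1$) Hermitian metric on $K^{-1}$; locally $\Delta\log g_0=g_0$. For $q_n=q_n dz^n\in H^0(\Sigma,K^n)$, $|q_n|^2:=q_n\bar q_n$. $q_n$ case with $n=2m$: $E=\bigoplus_{k=1}^n K^{(n+1-2k)/2}$, Higgs field $\phi$ with $\phi_{k+1,k}=1$, $\phi_{1,n}=q_n$, other entries $0$. The unique determinant-one Hermitian metric solving $F^{\nabla^h}+[\phi,\phi^{*_h}]=0$ is $h=\mathrm{diag}(h_1,\dots,h_m,h_m^{-1},\dots,h_1^{-1})$, $h_k$ a Hermitian metric on $K^{(n+1-2k)/2}$, and the equation is equivalent to: $\Delta\log h_1+h_1^{-1}h_2-h_1^2|q_n|^2=0$; $\Delta\log h_k+h_k^{-1}h_{k+1}-h_{k-1}^{-1}h_k=0$ for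 $2\le k\le m-1$; $\Delta\log h_m+h_m^{-2}-h_{m-1}^{-1}h_m=0$. *)

theory Defs
  imports "HOL-Analysis.Analysis"
begin

text \<open>Model: the closed Riemann surface of genus at least 2 is uniformized as the
quotient of the upper half plane by a cocompact, torsion-free Fuchsian group Gamma.
Sections of line bundles on Sigma are Gamma-equivariant functions on the upper half plane.\<close>

definition upper_half :: "complex set" where
  "upper_half = {z. Im z > 0}"

definition mob :: "real \<times> real \<times> real \<times> real \<Rightarrow> complex \<Rightarrow> complex" where
  "mob g z = (case g of (a,b,c,d) \<Rightarrow>
      (of_real a * z + of_real b) / (of_real c * z + of_real d))"

text \<open>The automorphy factor c z + d; note that mob g has derivative 1/(c z + d)^2.\<close>
definition jfac :: "real \<times> real \<times> real \<times> real \<Rightarrow> complex \<Rightarrow> complex" where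
  "jfac g z = (case g of (a,b,c,d) \<Rightarrow> of_real c * z + of_real d)"

definition mat_mult :: "real \<times> real \<times> real \<times> real \<Rightarrow> real \<times> real \<times> real \<times> real
    \<Rightarrow> real \<times> real \<times> real \<times> real" where
  "mat_mult g h = (case g of (a,b,c,d) \<Rightarrow> case h of (a',b',c',d') \<Rightarrow>
      (a*a' + b*c', a*b' + b*d', c*a' + d*c', c*b' + d*d'))"

definition mat_inv :: "real \<times> real \<times> real \<times> real \<Rightarrow> real \<times> real \<times> real \<times> real" where
  "mat_inv g = (case g of (a,b,c,d) \<Rightarrow> (d, -b, -c, a))"

text \<open>A cocompact, torsion-free (fixed-point free) discrete subgroup of SL(2,R);
the quotient of the upper half plane by it is a closed Riemann surface of genus at least 2,
and every such surface arises this way (uniformization).\<close>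
definition cocompact_fuchsian :: "(real \<times> real \<times> real \<times> real) set \<Rightarrow> bool" where
  "cocompact_fuchsian G \<longleftrightarrow>
     (\<forall>g\<in>G. case g of (a,b,c,d) \<Rightarrow> a*d - b*c = 1) \<and>
     (1,0,0,1) \<in> G \<and>
     (\<forall>g\<in>G. \<forall>h\<in>G. mat_mult g h \<in> G) \<and>
     (\<forall>g\<in>G. mat_inv g \<in> G) \<and>
     (\<forall>g\<in>G. \<forall>z\<in>upper_half. mob g z = z \<longrightarrow> g = (1,0,0,1) \<or> g = (-1,0,0,-1)) \<and>
     (\<forall>K. compact K \<and> K \<subseteq> upper_half \<longrightarrow> finite {g\<in>G. mob g ` K \<inter> K \<noteq> {}}) \<and>
     (\<exists>K. compact K \<and> K \<subseteq> upper_half \<and> (\<forall>z\<in>upper_half. \<exists>g\<in>G. mob g z \<in> K))"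

text \<open>Coefficient f of a smooth section f (dz dzbar)^s of (K \<otimes> Kbar)^s, s = e/2:
invariance f(gz) |(gz)'|^{2s} = f(z), i.e. f(gz) = |cz+d|^(2e) f(z).\<close>
definition equivariant_density :: "(real \<times> real \<times> real \<times> real) set \<Rightarrow> int \<Rightarrow> (complex \<Rightarrow> real) \<Rightarrow> bool" where
  "equivariant_density G e f \<longleftrightarrow>
     (\<forall>g\<in>G. \<forall>z\<in>upper_half. f (mob g z) = cmod (jfac g z) powr (2 * real_of_int e) * f z)"

text \<open>Holomorphic section q dz^n of K^n: q(gz) ((gz)')^n = q(z).\<close>
definition holo_diff :: "(real \<times> real \<times> real \<times> real) set \<Rightarrow> nat \<Rightarrow> (complex \<Rightarrow> complex) \<Rightarrow> bool" where
  "holo_diff G n q \<longleftrightarrow> q holomorphic_on upper_half \<and>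
     (\<forall>g\<in>G. \<forall>z\<in>upper_half. q (mob g z) = (jfac g z) ^ (2*n) * q z)"

text \<open>Real partial derivatives and the operator Delta = d_z d_zbar = (1/4)(d_xx + d_yy).\<close>
definition px :: "(complex \<Rightarrow> real) \<Rightarrow> complex \<Rightarrow> real" where
  "px f z = frechet_derivative f (at z) 1"

definition py :: "(complex \<Rightarrow> real) \<Rightarrow> complex \<Rightarrow> real" where
  "py f z = frechet_derivative f (at z) \<i>"

definition Lap :: "(complex \<Rightarrow> real) \<Rightarrow> complex \<Rightarrow> real" where
  "Lap f z = (px (px f) z + py (py f) z) / 4"

definition C2_on :: "complex set \<Rightarrow> (complex \<Rightarrow> real) \<Rightarrow> bool" where
  "C2_on S f \<longleftrightarrow>
     (\<forall>z\<in>S. f differentiable (at z) \<and> px f differentiable (at z) \<and> py f differentiable (at z)) \<and>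
     continuous_on S (px (px f)) \<and> continuous_on S (py (px f)) \<and>
     continuous_on S (px (py f)) \<and> continuous_on S (py (py f))"

text \<open>The hyperbolic (curvature -1) metric g0 dz dzbar in the normalization Delta log g0 = g0.\<close>
definition g0 :: "complex \<Rightarrow> real" where
  "g0 z = 1 / (2 * (Im z)^2)"

end

theory Submission
  imports Defs
begin

(* Write a_0 = h_1^2 |q|^2, a_j = h_{j+1}/h_j for 0 < j < m and a_m = h_m^(-2). The equations
   say Lap (log h_k) = a_{k-1} - a_k, so the a_j solve the Toda system of type C_m,
   Lap (log a_j) = 2 a_j - a_{j+1} - a_{j-1} with a_{m+1} = a_{m-1}, and Lap (log g0) = g0.
   The constants c_j = j m - j^2/2 satisfy 2 c_j - c_{j+1} - c_{j-1} = 1, c_0 = 0 and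
   c_{m+1} = c_{m-1}, so r_j = a_j / (c_j g0) has Lap (log r_j) = 2 a_j - a_{j+1} - a_{j-1} - g0.
   Each r_j is invariant under the Fuchsian group and hence attains its minimum; at a point
   realising the smallest minimum mu, Lap (log r_k) >= 0 and a_j >= mu c_j g0 give
   (mu - 1) g0 >= 0, i.e. all r_j >= 1. If r_k = 1 somewhere, then u = log r_k >= 0 satisfies
   Lap u <= 2 a_k u, so u vanishes identically by the strong minimum principle (proved via Hopf's
   boundary lemma); evaluating Lap (log r_j) >= 0 for j = k, k - 1, ..., 1 then propagates the
   equality down to a_0 = 0, i.e. q = 0. *)

section \<open>Second derivatives and the Laplacian\<close>

definition twice_differentiable_on :: "complex set \<Rightarrow> (complex \<Rightarrow> real) \<Rightarrow> bool" where
  "twice_differentiable_on S f \<longleftrightarrow>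
     (\<forall>z\<in>S. f differentiable at z \<and> px f differentiable at z \<and> py f differentiable at z)"

lemma frechet_derivative_cong_open:
  assumes "open S" "z \<in> S" "\<And>w. w \<in> S \<Longrightarrow> f w = g w"
  shows "frechet_derivative f (at z) = frechet_derivative g (at z)"
proof -
  have "(f has_derivative F) (at z) \<longleftrightarrow> (g has_derivative F) (at z)" for F
    using has_derivative_transform_within_open[OF _ assms(1,2)] assms(3) by metis
  then show ?thesis
    unfolding frechet_derivative_def by simp
qed

lemma differentiable_cong_open:
  assumes "open S" "z \<in> S" "\<And>w. w \<in> S \<Longrightarrow> f w = g w" "f differentiable at z"
  shows "g differentiable at z"
  using has_derivative_transform_within_open[OF _ assms(1,2)] assms(3,4)
  unfolding differentiable_def by metis

lemma partials_cong_open: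
  assumes "open S" "z \<in> S" "\<And>w. w \<in> S \<Longrightarrow> f w = g w"
  shows "px f z = px g z" "py f z = py g z"
  unfolding px_def py_def using frechet_derivative_cong_open[OF assms] by auto

lemma Lap_cong_open:
  assumes "open S" "z \<in> S" "\<And>w. w \<in> S \<Longrightarrow> f w = g w"
  shows "Lap f z = Lap g z"
proof -
  have "px f w = px g w" "py f w = py g w" if "w \<in> S" for w
    using partials_cong_open[OF assms(1) that assms(3)] by auto
  then show ?thesis
    unfolding Lap_def using partials_cong_open[OF assms(1,2)] by metis
qed

lemma twice_differentiable_on_cong_open:
  assumes "open S" "twice_differentiable_on S f" "\<And>w. w \<in> S \<Longrightarrow> f w = g w"
  shows "twice_differentiable_on S g"
proof -
  have "px f w = px g w" "py f w = py g w" if "w \<in> S" for w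
    using partials_cong_open[OF assms(1) that assms(3)] by auto
  then show ?thesis
    using assms differentiable_cong_open[OF assms(1)]
    unfolding twice_differentiable_on_def by metis
qed

lemma px_eq_derivative: "(f has_derivative F) (at z) \<Longrightarrow> px f z = F 1"
  unfolding px_def using frechet_derivative_at by metis

lemma py_eq_derivative: "(f has_derivative F) (at z) \<Longrightarrow> py f z = F \<i>"
  unfolding py_def using frechet_derivative_at by metis

lemma twice_differentiable_on_imp_continuous_on:
  "twice_differentiable_on S f \<Longrightarrow> continuous_on S f"
  unfolding twice_differentiable_on_def
  by (meson continuous_at_imp_continuous_on differentiable_imp_continuous_within)

lemma Lap_from_derivatives:
  fixes f P Q :: "complex \<Rightarrow> real"
  assumes S: "open S"
    and df: "\<And>w. w \<in> S \<Longrightarrow> (f has_derivative F w) (at w)"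
    and dP: "\<And>w. w \<in> S \<Longrightarrow> (P has_derivative P' w) (at w)"
    and dQ: "\<And>w. w \<in> S \<Longrightarrow> (Q has_derivative Q' w) (at w)"
    and FP: "\<And>w. w \<in> S \<Longrightarrow> F w 1 = P w"
    and FQ: "\<And>w. w \<in> S \<Longrightarrow> F w \<i> = Q w"
  shows "twice_differentiable_on S f"
    and "z \<in> S \<Longrightarrow> Lap f z = (P' z 1 + Q' z \<i>) / 4"
proof -
  have px: "px f w = P w" and py: "py f w = Q w" if "w \<in> S" for w
    using px_eq_derivative[OF df] py_eq_derivative[OF df] FP FQ that by auto
  show "twice_differentiable_on S f"
    unfolding twice_differentiable_on_def
  proof (intro ballI conjI)
    fix w assume w: "w \<in> S"
    show "f differentiable at w"
      using df[OF w] by (rule differentiableI)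
    show "px f differentiable at w"
      by (rule differentiable_cong_open[OF S w, of P]) (use px dP[OF w] in \<open>auto intro: differentiableI\<close>)
    show "py f differentiable at w"
      by (rule differentiable_cong_open[OF S w, of Q]) (use py dQ[OF w] in \<open>auto intro: differentiableI\<close>)
  qed
  assume z: "z \<in> S"
  have "px (px f) z = P' z 1"
    using partials_cong_open(1)[OF S z, of "px f" P] px px_eq_derivative[OF dP[OF z]] by simp
  moreover have "py (py f) z = Q' z \<i>"
    using partials_cong_open(2)[OF S z, of "py f" Q] py py_eq_derivative[OF dQ[OF z]] by simp
  ultimately show "Lap f z = (P' z 1 + Q' z \<i>) / 4"
    unfolding Lap_def by simp
qed

lemma
  fixes f g :: "complex \<Rightarrow> real"
  assumes S: "open S" and f: "twice_differentiable_on S f" and g: "twice_differentiable_on S g"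
  shows twice_differentiable_on_lincomb: "twice_differentiable_on S (\<lambda>w. c * f w + g w)"
    and Lap_lincomb: "z \<in> S \<Longrightarrow> Lap (\<lambda>w. c * f w + g w) z = c * Lap f z + Lap g z"
proof -
  let ?D = "\<lambda>u w. frechet_derivative u (at w)"
  have deriv: "((\<lambda>w. c * u w + v w) has_derivative (\<lambda>h. c * ?D u w h + ?D v w h)) (at w)"
    if "u differentiable at w" "v differentiable at w" for u v :: "complex \<Rightarrow> real" and w
    using that by (auto intro!: derivative_eq_intros simp: frechet_derivative_works[symmetric])
  have diff: "f differentiable at w" "g differentiable at w"
    "px f differentiable at w" "px g differentiable at w"
    "py f differentiable at w" "py g differentiable at w" if "w \<in> S" for w
    using f g that unfolding twice_differentiable_on_def by auto
  note L = Lap_from_derivatives[OF S, of "\<lambda>w. c * f w + g w" "\<lambda>w h. c * ?D f w h + ?D g w h"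
      "\<lambda>w. c * px f w + px g w" "\<lambda>w h. c * ?D (px f) w h + ?D (px g) w h"
      "\<lambda>w. c * py f w + py g w" "\<lambda>w h. c * ?D (py f) w h + ?D (py g) w h"]
  have df: "\<And>w. w \<in> S \<Longrightarrow> ((\<lambda>w. c * f w + g w) has_derivative (\<lambda>h. c * ?D f w h + ?D g w h)) (at w)"
    and dP: "\<And>w. w \<in> S \<Longrightarrow> ((\<lambda>w. c * px f w + px g w) has_derivative
      (\<lambda>h. c * ?D (px f) w h + ?D (px g) w h)) (at w)"
    and dQ: "\<And>w. w \<in> S \<Longrightarrow> ((\<lambda>w. c * py f w + py g w) has_derivative
      (\<lambda>h. c * ?D (py f) w h + ?D (py g) w h)) (at w)"
    using diff by (auto intro!: deriv)
  show "twice_differentiable_on S (\<lambda>w. c * f w + g w)"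
    by (rule L(1)) (use df dP dQ in \<open>auto simp: px_def py_def\<close>)
  assume z: "z \<in> S"
  have "Lap (\<lambda>w. c * f w + g w) z =
      (c * ?D (px f) z 1 + ?D (px g) z 1 + (c * ?D (py f) z \<i> + ?D (py g) z \<i>)) / 4"
    by (rule L(2)) (use df dP dQ z in \<open>auto simp: px_def py_def\<close>)
  then show "Lap (\<lambda>w. c * f w + g w) z = c * Lap f z + Lap g z"
    unfolding Lap_def[of f] Lap_def[of g] px_def[of "px f"] px_def[of "px g"]
      py_def[of "py f"] py_def[of "py g"]
    by (simp add: field_simps)
qed

lemma frechet_derivative_add_const:
  "frechet_derivative (\<lambda>w. f w + c) F = frechet_derivative f F"
proof -
  have "((\<lambda>w. f w + c) has_derivative D) F \<longleftrightarrow> (f has_derivative D) F" for D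
    using has_derivative_add_const[of f D F c] has_derivative_add_const[of "\<lambda>w. f w + c" D F "- c"]
    by auto
  then show ?thesis
    unfolding frechet_derivative_def by simp
qed

lemma
  shows px_add_const: "px (\<lambda>w. f w + c) = px f"
    and py_add_const: "py (\<lambda>w. f w + c) = py f"
    and Lap_add_const: "Lap (\<lambda>w. f w + c) = Lap f"
  unfolding px_def py_def Lap_def frechet_derivative_add_const by simp_all

lemma
  shows twice_differentiable_on_const: "twice_differentiable_on S (\<lambda>w. c)"
    and Lap_const: "Lap (\<lambda>w. c) z = 0"
  unfolding twice_differentiable_on_def Lap_def px_def py_def by simp_all

lemma twice_differentiable_on_add_const:
  "twice_differentiable_on S (\<lambda>w. f w + c) \<longleftrightarrow> twice_differentiable_on S f"
proof -
  have "(\<lambda>w. f w + c) differentiable at z \<longleftrightarrow> f differentiable at z" for z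
    using differentiable_add[of "\<lambda>w. f w + c" "at z" "\<lambda>_. - c"] differentiable_add[of f "at z" "\<lambda>_. c"]
    by auto
  then show ?thesis
    unfolding twice_differentiable_on_def px_add_const py_add_const by simp
qed

lemma twice_differentiable_on_ln:
  fixes h :: "complex \<Rightarrow> real"
  assumes S: "open S" and h: "twice_differentiable_on S h" and pos: "\<And>w. w \<in> S \<Longrightarrow> h w > 0"
  shows "twice_differentiable_on S (\<lambda>w. ln (h w))"
proof -
  let ?D = "\<lambda>u w. frechet_derivative u (at w)"
  have diff: "h differentiable at w" "px h differentiable at w" "py h differentiable at w"
    if "w \<in> S" for w
    using h that unfolding twice_differentiable_on_def by auto
  have quotient: "((\<lambda>w. P w * inverse (h w)) has_derivative
      (\<lambda>v. ?D P w v * inverse (h w) - P w * (inverse (h w) * ?D h w v * inverse (h w)))) (at w)"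
    if "w \<in> S" "P differentiable at w" for P w
    using that diff pos[OF that(1)]
    by (auto intro!: derivative_eq_intros simp: frechet_derivative_works[symmetric])
  have "((\<lambda>w. ln (h w)) has_derivative (\<lambda>v. ?D h w v * inverse (h w))) (at w)" if "w \<in> S" for w
    using that diff pos[OF that]
    by (auto intro!: derivative_eq_intros simp: frechet_derivative_works[symmetric])
  then show ?thesis
    by (rule Lap_from_derivatives(1)[OF S _ quotient quotient])
      (auto simp: diff diff(2,3)[unfolded px_def py_def] px_def py_def)
qed

lemma twice_differentiable_on_subset:
  "twice_differentiable_on S f \<Longrightarrow> T \<subseteq> S \<Longrightarrow> twice_differentiable_on T f"
  unfolding twice_differentiable_on_def by blast

lemma continuous_on_of_ln:
  fixes f :: "complex \<Rightarrow> real"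
  assumes "twice_differentiable_on S (\<lambda>z. ln (f z))" "\<And>z. z \<in> S \<Longrightarrow> 0 < f z"
  shows "continuous_on S f"
proof -
  have "continuous_on S (\<lambda>z. exp (ln (f z)))"
    by (rule continuous_on_exp[OF twice_differentiable_on_imp_continuous_on[OF assms(1)]])
  then show ?thesis
    by (rule continuous_on_eq) (use assms(2) in simp)
qed

section \<open>Minimum principles\<close>

lemma frechet_derivative_at_min:
  fixes f :: "complex \<Rightarrow> real"
  assumes "open S" "z \<in> S" "f differentiable at z" "\<And>w. w \<in> S \<Longrightarrow> f z \<le> f w"
  shows "frechet_derivative f (at z) = (\<lambda>h. 0)"
proof -
  have "\<forall>\<^sub>F w in at z. w \<in> S"
    by (rule eventually_at_in_open'[OF assms(1,2)])
  then have "\<forall>\<^sub>F w in at z. f z \<le> f w"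
    by eventually_elim (use assms(4) in auto)
  then show ?thesis
    using has_derivative_local_min[OF frechet_derivative_works[THEN iffD1, OF assms(3)]] by blast
qed

lemma has_real_derivative_along_line:
  fixes f :: "complex \<Rightarrow> real"
  assumes "f differentiable at (z + of_real t * v)"
  shows "((\<lambda>s. f (z + of_real s * v)) has_real_derivative
           frechet_derivative f (at (z + of_real t * v)) v) (at t)"
proof -
  let ?F = "frechet_derivative f (at (z + of_real t * v))"
  have "((\<lambda>s. z + of_real s * v) has_derivative (\<lambda>s. of_real s * v)) (at t)"
    by (auto intro!: derivative_eq_intros)
  from has_derivative_compose[OF this frechet_derivative_works[THEN iffD1, OF assms]]
  have "((\<lambda>s. f (z + of_real s * v)) has_derivative (\<lambda>s. ?F (s *\<^sub>R v))) (at t)"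
    by (simp add: scaleR_conv_of_real)
  moreover have "?F (s *\<^sub>R v) = ?F v * s" for s
    using linear_frechet_derivative[OF assms] by (simp add: linear_scale)
  ultimately show ?thesis
    unfolding has_field_derivative_def by simp
qed

lemma derivative_nonneg_at_left_min:
  fixes \<phi> :: "real \<Rightarrow> real"
  assumes "(\<phi> has_real_derivative d) (at 0)" "0 < e" "\<And>t. 0 < t \<Longrightarrow> t < e \<Longrightarrow> \<phi> 0 \<le> \<phi> t"
  shows "0 \<le> d"
proof (rule ccontr)
  assume "\<not> 0 \<le> d"
  then obtain \<delta> where \<delta>: "0 < \<delta>" "\<And>t. 0 < t \<Longrightarrow> t < \<delta> \<Longrightarrow> \<phi> t < \<phi> 0"
    using DERIV_neg_dec_right[OF assms(1)] by force
  define t where "t = min \<delta> e / 2"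
  have "0 < t" "t < \<delta>" "t < e"
    using \<delta>(1) assms(2) by (auto simp: t_def)
  then show False
    using \<delta>(2) assms(3) by force
qed

lemma second_derivative_nonneg_at_left_min:
  fixes \<phi> \<phi>' :: "real \<Rightarrow> real"
  assumes e: "0 < e"
    and \<phi>: "\<And>t. 0 \<le> t \<Longrightarrow> t < e \<Longrightarrow> (\<phi> has_real_derivative \<phi>' t) (at t)"
    and \<phi>': "(\<phi>' has_real_derivative d) (at 0)" "\<phi>' 0 = 0"
    and min: "\<And>t. 0 < t \<Longrightarrow> t < e \<Longrightarrow> \<phi> 0 \<le> \<phi> t"
  shows "0 \<le> d"
proof (rule ccontr)
  assume "\<not> 0 \<le> d"
  then obtain \<delta> where \<delta>: "0 < \<delta>" "\<And>t. 0 < t \<Longrightarrow> t < \<delta> \<Longrightarrow> \<phi>' t < 0"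
    using DERIV_neg_dec_right[OF \<phi>'(1)] \<phi>'(2) by force
  define t where "t = min \<delta> e / 2"
  have t: "0 < t" "t < \<delta>" "t < e"
    using \<delta>(1) e by (auto simp: t_def)
  obtain \<xi> where \<xi>: "0 < \<xi>" "\<xi> < t" "\<phi> t - \<phi> 0 = (t - 0) * \<phi>' \<xi>"
    using MVT2[OF t(1), of \<phi> \<phi>'] \<phi> t(3) by force
  have "\<phi> t < \<phi> 0"
    using \<xi> \<delta>(2)[of \<xi>] t mult_pos_neg[of t "\<phi>' \<xi>"] by simp
  then show False
    using min t(1,3) by force
qed

lemma directional_second_derivative_nonneg_at_min:
  fixes f :: "complex \<Rightarrow> real"
  assumes S: "open S" and z: "z \<in> S" and f: "\<And>w. w \<in> S \<Longrightarrow> f differentiable at w"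
    and D: "(\<lambda>w. frechet_derivative f (at w) v) differentiable at z"
    and min: "\<And>w. w \<in> S \<Longrightarrow> f z \<le> f w"
  shows "0 \<le> frechet_derivative (\<lambda>w. frechet_derivative f (at w) v) (at z) v"
proof -
  let ?D = "\<lambda>w. frechet_derivative f (at w) v"
  obtain e where e: "0 < e" "ball z e \<subseteq> S"
    using S z open_contains_ball by blast
  define e' where "e' = e / (cmod v + 1)"
  have e': "0 < e'"
    using e(1) by (simp add: e'_def add_nonneg_pos)
  have line: "z + of_real t * v \<in> S" if "0 \<le> t" "t < e'" for t
  proof -
    have "t * cmod v \<le> t * (cmod v + 1)"
      using that(1) by (simp add: distrib_left)
    also have "\<dots> < e"
      using that(2) by (simp add: e'_def pos_less_divide_eq add_nonneg_pos)
    finally show ?thesis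
      using e(2) that(1) by (auto simp: dist_norm norm_mult)
  qed
  show ?thesis
  proof (rule second_derivative_nonneg_at_left_min[OF e'])
    show "((\<lambda>t. f (z + of_real t * v)) has_real_derivative ?D (z + of_real t * v)) (at t)"
      if "0 \<le> t" "t < e'" for t
      using has_real_derivative_along_line f line[OF that] by blast
    show "((\<lambda>t. ?D (z + of_real t * v)) has_real_derivative frechet_derivative ?D (at z) v) (at 0)"
      using has_real_derivative_along_line[of ?D z 0 v] D by simp
    show "?D (z + of_real 0 * v) = 0"
      using frechet_derivative_at_min[OF S z f[OF z] min] by simp
    show "f (z + of_real 0 * v) \<le> f (z + of_real t * v)" if "0 < t" "t < e'" for t
      using min line that by simp
  qed
qed

lemma Lap_nonneg_at_min:
  assumes S: "open S" and f: "twice_differentiable_on S f" and z: "z \<in> S"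
    and min: "\<And>w. w \<in> S \<Longrightarrow> f z \<le> f w"
  shows "0 \<le> Lap f z"
proof -
  have "0 \<le> frechet_derivative (\<lambda>w. frechet_derivative f (at w) v) (at z) v"
    if "(\<lambda>w. frechet_derivative f (at w) v) differentiable at z" for v
    by (rule directional_second_derivative_nonneg_at_min[OF S z _ that min])
      (use f in \<open>auto simp: twice_differentiable_on_def\<close>)
  then have "0 \<le> px (px f) z" "0 \<le> py (py f) z"
    using f z unfolding twice_differentiable_on_def px_def py_def by auto
  then show ?thesis
    unfolding Lap_def by simp
qed

lemma weak_minimum_principle:
  assumes K: "compact K" and U: "open U" "U \<subseteq> K"
    and W: "continuous_on K W" "twice_differentiable_on U W"
    and boundary: "\<And>w. w \<in> K - U \<Longrightarrow> 0 \<le> W w"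
    and superharmonic: "\<And>w. w \<in> U \<Longrightarrow> W w < 0 \<Longrightarrow> Lap W w < 0"
    and w: "w \<in> K"
  shows "0 \<le> W w"
proof (rule ccontr)
  assume neg: "\<not> 0 \<le> W w"
  obtain p where p: "p \<in> K" "\<And>v. v \<in> K \<Longrightarrow> W p \<le> W v"
    using continuous_attains_inf[OF K _ W(1)] w by blast
  have "W p < 0"
    using p(2)[OF w] neg by simp
  then have "p \<in> U"
    using boundary p(1) by force
  have "0 \<le> Lap W p"
    by (rule Lap_nonneg_at_min[OF U(1) W(2) \<open>p \<in> U\<close>]) (use p(2) U(2) in auto)
  then show False
    using superharmonic[OF \<open>p \<in> U\<close> \<open>W p < 0\<close>] by simp
qed

definition gauss :: "real \<Rightarrow> complex \<Rightarrow> complex \<Rightarrow> real" where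
  "gauss \<alpha> c w = exp (- \<alpha> * ((Re w - Re c)\<^sup>2 + (Im w - Im c)\<^sup>2))"

lemma gauss_eq_dist: "gauss \<alpha> c w = exp (- \<alpha> * (dist w c)\<^sup>2)"
  unfolding gauss_def dist_norm using cmod_power2[of "w - c"] by simp

lemma gauss_pos: "0 < gauss \<alpha> c w"
  unfolding gauss_def by simp

lemma has_derivative_gauss:
  "(gauss \<alpha> c has_derivative
     (\<lambda>h. - 2 * \<alpha> * gauss \<alpha> c w * ((Re w - Re c) * Re h + (Im w - Im c) * Im h))) (at w)"
  unfolding gauss_def by (auto intro!: derivative_eq_intros simp: algebra_simps)

lemma
  shows twice_differentiable_on_gauss: "twice_differentiable_on UNIV (gauss \<alpha> c)"
    and Lap_gauss: "Lap (gauss \<alpha> c) z = (\<alpha>\<^sup>2 * (dist z c)\<^sup>2 - \<alpha>) * gauss \<alpha> c z"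
proof -
  let ?P = "\<lambda>w. - 2 * \<alpha> * gauss \<alpha> c w * (Re w - Re c)"
  let ?Q = "\<lambda>w. - 2 * \<alpha> * gauss \<alpha> c w * (Im w - Im c)"
  have "(?P has_derivative (\<lambda>h. - 2 * \<alpha> * (- 2 * \<alpha> * gauss \<alpha> c w *
      ((Re w - Re c) * Re h + (Im w - Im c) * Im h) * (Re w - Re c) + gauss \<alpha> c w * Re h))) (at w)"
    "(?Q has_derivative (\<lambda>h. - 2 * \<alpha> * (- 2 * \<alpha> * gauss \<alpha> c w *
      ((Re w - Re c) * Re h + (Im w - Im c) * Im h) * (Im w - Im c) + gauss \<alpha> c w * Im h))) (at w)"
    for w
    by (auto intro!: derivative_eq_intros has_derivative_gauss simp: algebra_simps)
  note L = Lap_from_derivatives[OF open_UNIV has_derivative_gauss[of \<alpha> c] this]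
  show "twice_differentiable_on UNIV (gauss \<alpha> c)"
    by (rule L(1)) simp_all
  have "Lap (gauss \<alpha> c) z = (\<alpha>\<^sup>2 * ((Re z - Re c)\<^sup>2 + (Im z - Im c)\<^sup>2) - \<alpha>) * gauss \<alpha> c z"
    using L(2)[where z=z] by (simp add: field_simps power2_eq_square)
  moreover have "(dist z c)\<^sup>2 = (Re z - Re c)\<^sup>2 + (Im z - Im c)\<^sup>2"
    unfolding dist_norm using cmod_power2[of "z - c"] by simp
  ultimately show "Lap (gauss \<alpha> c) z = (\<alpha>\<^sup>2 * (dist z c)\<^sup>2 - \<alpha>) * gauss \<alpha> c z"
    by simp
qed

lemma gauss_le_one: "0 \<le> \<alpha> \<Longrightarrow> gauss \<alpha> c w \<le> 1"
  unfolding gauss_def by simp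

lemma Lap_gauss_ge:
  assumes "0 < r" "8 / r\<^sup>2 \<le> \<alpha>" "r/2 \<le> dist w c"
  shows "\<alpha> * gauss \<alpha> c w \<le> Lap (gauss \<alpha> c) w"
proof -
  have \<alpha>: "0 < \<alpha>" "2 \<le> \<alpha> * r\<^sup>2 / 4"
    using assms(1,2) order.strict_trans2[of 0 "8 / r\<^sup>2" \<alpha>] by (auto simp: field_simps)
  have "\<alpha>\<^sup>2 * (r/2)\<^sup>2 \<le> \<alpha>\<^sup>2 * (dist w c)\<^sup>2"
    using assms(1,3) by (intro mult_left_mono power_mono) auto
  moreover have "2 * \<alpha> \<le> \<alpha> * (\<alpha> * r\<^sup>2 / 4)"
    using \<alpha> by simp
  moreover have "\<alpha>\<^sup>2 * (r/2)\<^sup>2 = \<alpha> * (\<alpha> * r\<^sup>2 / 4)"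
    by (simp add: power2_eq_square field_simps)
  ultimately have "\<alpha> \<le> \<alpha>\<^sup>2 * (dist w c)\<^sup>2 - \<alpha>"
    by linarith
  then show ?thesis
    unfolding Lap_gauss using gauss_pos[of \<alpha> c w] by (simp add: mult_right_mono)
qed

lemma Lap_sub_gauss_neg:
  assumes r: "0 < r" "r/2 \<le> dist w x" and \<alpha>: "8 / r\<^sup>2 \<le> \<alpha>" "C + 1 \<le> \<alpha>"
    and C: "0 \<le> C" "Lap u w \<le> C * u w"
    and \<epsilon>: "0 < \<epsilon>" and u: "u w < \<epsilon> * gauss \<alpha> x w"
  shows "Lap u w - \<epsilon> * Lap (gauss \<alpha> x) w < 0"
proof -
  have "C * u w \<le> C * (\<epsilon> * gauss \<alpha> x w)"
    using u C(1) by (simp add: mult_left_mono)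
  moreover have "(C + 1) * gauss \<alpha> x w \<le> Lap (gauss \<alpha> x) w"
    using Lap_gauss_ge[OF r(1) \<alpha>(1) r(2)] mult_right_mono[OF \<alpha>(2) less_imp_le[OF gauss_pos[of \<alpha> x w]]]
    by linarith
  then have "\<epsilon> * ((C + 1) * gauss \<alpha> x w) \<le> \<epsilon> * Lap (gauss \<alpha> x) w"
    using \<epsilon> by (simp add: mult_left_mono)
  moreover have "\<epsilon> * ((C + 1) * gauss \<alpha> x w) = C * (\<epsilon> * gauss \<alpha> x w) + \<epsilon> * gauss \<alpha> x w"
    by (simp add: algebra_simps)
  moreover have "0 < \<epsilon> * gauss \<alpha> x w"
    using \<epsilon> gauss_pos by simp
  ultimately show ?thesis
    using C(2) by linarith
qed

text \<open>The barrier \<open>gauss \<alpha> x - exp (- \<alpha> * r\<^sup>2)\<close> vanishes on the outer circle of the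
  annulus and is less than \<open>1\<close> on the inner one.\<close>
lemma annulus_barrier_le:
  fixes u :: "complex \<Rightarrow> real"
  assumes S: "open S" and u: "twice_differentiable_on S u"
    and r: "0 < r" "cball x r \<subseteq> S"
    and nonneg: "\<And>w. w \<in> cball x r \<Longrightarrow> 0 \<le> u w"
    and Lap_u: "0 \<le> C" "\<And>w. w \<in> ball x r \<Longrightarrow> Lap u w \<le> C * u w"
    and \<alpha>: "8 / r\<^sup>2 \<le> \<alpha>" "C + 1 \<le> \<alpha>"
    and \<epsilon>: "0 < \<epsilon>" "\<And>w. dist x w = r/2 \<Longrightarrow> \<epsilon> \<le> u w"
    and w: "r/2 \<le> dist x w" "dist x w \<le> r"
  shows "\<epsilon> * (gauss \<alpha> x w - exp (- \<alpha> * r\<^sup>2)) \<le> u w"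
proof -
  define k where "k = exp (- \<alpha> * r\<^sup>2)"
  define W where "W v = u v - \<epsilon> * (gauss \<alpha> x v - k)" for v
  define K where "K = cball x r - ball x (r/2)"
  define U where "U = ball x r - cball x (r/2)"
  have U_open: "open U"
    by (simp add: U_def open_Diff)
  have W_lincomb: "W = (\<lambda>v. ((- \<epsilon>) * gauss \<alpha> x v + u v) + \<epsilon> * k)"
    by (auto simp: W_def algebra_simps)
  have u_U: "twice_differentiable_on U u"
    by (rule twice_differentiable_on_subset[OF u]) (use r(2) in \<open>force simp: U_def\<close>)
  have gauss_U: "twice_differentiable_on U (gauss \<alpha> x)"
    using twice_differentiable_on_subset[OF twice_differentiable_on_gauss] by blast
  have "0 \<le> W w"
  proof (rule weak_minimum_principle[of K U W])
    show "compact K" "open U" "U \<subseteq> K" "w \<in> K"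
      using w U_open by (auto simp: K_def U_def compact_diff)
    have "K \<subseteq> S"
      using r(2) by (auto simp: K_def)
    then show "continuous_on K W"
      unfolding W_def gauss_def
      by (intro continuous_intros continuous_on_subset[OF twice_differentiable_on_imp_continuous_on[OF u]])
    show "twice_differentiable_on U W"
      unfolding W_lincomb twice_differentiable_on_add_const
      by (rule twice_differentiable_on_lincomb[OF U_open gauss_U u_U])
    show "0 \<le> W v" if "v \<in> K - U" for v
    proof -
      have "dist x v = r \<or> dist x v = r/2"
        using that by (auto simp: K_def U_def)
      moreover have "\<epsilon> * (gauss \<alpha> x v - k) \<le> \<epsilon>"
      proof -
        have "gauss \<alpha> x v - k \<le> 1"
          using gauss_le_one[of \<alpha> x v] \<alpha>(2) Lap_u(1) exp_gt_zero[of "- \<alpha> * r\<^sup>2"]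
          unfolding k_def by linarith
        then show ?thesis
          using \<epsilon>(1) by (simp add: mult_left_le)
      qed
      ultimately show ?thesis
        using nonneg[of v] \<epsilon>(2)[of v]
        by (auto simp: W_def gauss_eq_dist k_def dist_commute)
    qed
    show "Lap W v < 0" if v: "v \<in> U" "W v < 0" for v
    proof -
      have "0 < \<epsilon> * k"
        using \<epsilon>(1) by (simp add: k_def)
      then have "u v < \<epsilon> * gauss \<alpha> x v"
        using v(2) unfolding W_def right_diff_distrib by linarith
      moreover have "r/2 \<le> dist v x" "Lap u v \<le> C * u v"
        using v(1) Lap_u(2)[of v] by (auto simp: U_def dist_commute)
      ultimately have "Lap u v - \<epsilon> * Lap (gauss \<alpha> x) v < 0"
        using Lap_sub_gauss_neg[OF r(1) _ \<alpha> Lap_u(1) _ \<epsilon>(1)] by blast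
      moreover have "Lap W v = - \<epsilon> * Lap (gauss \<alpha> x) v + Lap u v"
        unfolding W_lincomb Lap_add_const by (rule Lap_lincomb[OF U_open gauss_U u_U v(1)])
      ultimately show ?thesis
        by simp
    qed
  qed
  then show ?thesis
    by (simp add: W_def k_def)
qed

lemma compact_pos_lower_bound:
  fixes f :: "'a::topological_space \<Rightarrow> real"
  assumes "compact K" "continuous_on K f" "\<And>x. x \<in> K \<Longrightarrow> 0 < f x"
  obtains \<epsilon> where "0 < \<epsilon>" "\<And>x. x \<in> K \<Longrightarrow> \<epsilon> \<le> f x"
proof (cases "K = {}")
  case True
  then show ?thesis
    using that[of 1] by simp
next
  case False
  then obtain p where "p \<in> K" "\<And>x. x \<in> K \<Longrightarrow> f p \<le> f x"
    using continuous_attains_inf[OF assms(1) False assms(2)] by blast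
  then show ?thesis
    using that[of "f p"] assms(3) by blast
qed

lemma dist_along_segment:
  fixes x y :: complex
  assumes "0 \<le> t" "t \<le> 1"
  shows "dist x (y + of_real t * (x - y)) = (1 - t) * dist x y"
proof -
  have "x - (y + of_real t * (x - y)) = of_real (1 - t) * (x - y)"
    by (simp add: algebra_simps)
  moreover have "cmod (of_real (1 - t) :: complex) = 1 - t"
    using assms by (simp only: norm_of_real)
  ultimately show ?thesis
    by (simp only: dist_norm norm_mult)
qed

lemma hopf_lemma:
  fixes u :: "complex \<Rightarrow> real"
  assumes S: "open S" and u: "twice_differentiable_on S u"
    and r: "0 < r" "cball x r \<subseteq> S"
    and nonneg: "\<And>w. w \<in> cball x r \<Longrightarrow> 0 \<le> u w"
    and pos: "\<And>w. w \<in> ball x r \<Longrightarrow> 0 < u w"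
    and Lap_u: "0 \<le> C" "\<And>w. w \<in> ball x r \<Longrightarrow> Lap u w \<le> C * u w"
    and y: "dist x y = r" "u y = 0"
  shows "0 < frechet_derivative u (at y) (x - y)"
proof -
  have sphere: "sphere x (r/2) \<subseteq> ball x r"
    using r(1) by auto
  have "continuous_on (sphere x (r/2)) u"
    by (rule continuous_on_subset[OF twice_differentiable_on_imp_continuous_on[OF u]])
      (use sphere ball_subset_cball[of x r] r(2) in blast)
  moreover have "\<And>w. w \<in> sphere x (r/2) \<Longrightarrow> 0 < u w"
    using sphere pos by blast
  ultimately obtain \<epsilon> where \<epsilon>: "0 < \<epsilon>" "\<And>w. w \<in> sphere x (r/2) \<Longrightarrow> \<epsilon> \<le> u w"
    using compact_pos_lower_bound[OF compact_sphere] by blast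
  define \<alpha> where "\<alpha> = max (8 / r\<^sup>2) (C + 1)"
  define k where "k = exp (- \<alpha> * r\<^sup>2)"
  have \<alpha>: "8 / r\<^sup>2 \<le> \<alpha>" "C + 1 \<le> \<alpha>"
    by (simp_all add: \<alpha>_def)
  define \<phi> where "\<phi> t = u (y + of_real t * (x - y)) - \<epsilon> * (gauss \<alpha> x (y + of_real t * (x - y)) - k)" for t
  have "\<phi> 0 \<le> \<phi> t" if t: "0 < t" "t < 1/2" for t
  proof -
    let ?p = "y + of_real t * (x - y)"
    have "t * r \<le> r / 2" "0 \<le> t * r"
      using t r(1) by simp_all
    then have p: "r/2 \<le> dist x ?p" "dist x ?p \<le> r"
      using dist_along_segment[of t x y] t y(1) by (simp_all add: left_diff_distrib)
    have "\<epsilon> * (gauss \<alpha> x ?p - k) \<le> u ?p"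
      unfolding k_def
      by (rule annulus_barrier_le[OF S u r nonneg Lap_u \<alpha> \<epsilon>(1)]) (use p \<epsilon>(2) in auto)
    moreover have "gauss \<alpha> x y = k"
      using y(1) by (simp add: gauss_eq_dist k_def dist_commute)
    ultimately show ?thesis
      by (simp add: \<phi>_def y(2))
  qed
  moreover have "(\<phi> has_real_derivative
      frechet_derivative u (at y) (x - y) - \<epsilon> * (2 * \<alpha> * r\<^sup>2 * gauss \<alpha> x y)) (at 0)"
  proof -
    have "(Re y - Re x) * Re (x - y) + (Im y - Im x) * Im (x - y) = - (r\<^sup>2)"
      using y(1) cmod_power2[of "x - y"] by (simp add: dist_norm power2_eq_square algebra_simps)
    then have "frechet_derivative (gauss \<alpha> x) (at y) (x - y) = 2 * \<alpha> * r\<^sup>2 * gauss \<alpha> x y"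
      by (simp add: frechet_derivative_at[OF has_derivative_gauss, symmetric])
    moreover have "u differentiable at y"
      using u y r(2) by (auto simp: twice_differentiable_on_def)
    ultimately show ?thesis
      unfolding \<phi>_def
      using has_real_derivative_along_line[of u y 0 "x - y"]
        has_real_derivative_along_line[of "gauss \<alpha> x" y 0 "x - y"] has_derivative_gauss
      by (auto intro!: derivative_eq_intros intro: differentiableI)
  qed
  ultimately have "0 \<le> frechet_derivative u (at y) (x - y) - \<epsilon> * (2 * \<alpha> * r\<^sup>2 * gauss \<alpha> x y)"
    by (intro derivative_nonneg_at_left_min[of \<phi> _ "1/2"]) auto
  moreover have "0 < \<epsilon> * (2 * \<alpha> * r\<^sup>2 * gauss \<alpha> x y)"
    using \<epsilon>(1) \<alpha>(2) Lap_u(1) r(1) gauss_pos[of \<alpha> x y] by simp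
  ultimately show ?thesis
    by linarith
qed

lemma vanishes_on_half_ball:
  fixes u A :: "complex \<Rightarrow> real"
  assumes S: "open S" and u: "twice_differentiable_on S u"
    and nonneg: "\<And>z. z \<in> S \<Longrightarrow> 0 \<le> u z"
    and A: "continuous_on S A" and Lap_u: "\<And>z. z \<in> S \<Longrightarrow> Lap u z \<le> A z * u z"
    and R: "0 < R" "cball z0 R \<subseteq> S" and z0: "u z0 = 0"
    and x: "x \<in> ball z0 (R/2)"
  shows "u x = 0"
proof (rule ccontr)
  assume "u x \<noteq> 0"
  define Z where "Z = {z \<in> cball z0 R. u z = 0}"
  have "closed Z"
    unfolding Z_def using R(2)
    by (intro continuous_closed_preimage_constant continuous_on_subset[OF
          twice_differentiable_on_imp_continuous_on[OF u]]) auto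
  moreover have "z0 \<in> Z"
    using R(1) z0 by (simp add: Z_def)
  ultimately obtain y where y: "y \<in> Z" and nearest: "\<And>z. z \<in> Z \<Longrightarrow> dist x y \<le> dist x z"
    using distance_attains_inf by blast
  define r where "r = dist x y"
  have "r < R/2"
    using nearest[OF \<open>z0 \<in> Z\<close>] x by (simp add: r_def dist_commute)
  have "0 < r"
    using y \<open>u x \<noteq> 0\<close> by (auto simp: r_def Z_def)
  have ball_in: "cball x r \<subseteq> cball z0 R"
  proof
    fix w assume "w \<in> cball x r"
    then have "dist z0 w \<le> dist z0 x + dist x w" "dist x w \<le> r"
      using dist_triangle[of z0 w x] by auto
    then show "w \<in> cball z0 R"
      using x \<open>r < R/2\<close> by simp
  qed
  then have ball_S: "cball x r \<subseteq> S"
    using R(2) by blast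
  have pos: "0 < u w" if "w \<in> ball x r" for w
  proof -
    have "w \<notin> Z"
      using nearest[of w] that by (force simp: r_def)
    then show ?thesis
      using that ball_in R(2) nonneg[of w] by (force simp: Z_def)
  qed
  obtain C where C: "0 < C" "\<And>w. w \<in> cball x r \<Longrightarrow> norm (A w) \<le> C"
    using compact_imp_bounded[OF compact_continuous_image[OF continuous_on_subset[OF A ball_S]
          compact_cball]] by (auto simp: bounded_pos)
  have Lap_le: "Lap u w \<le> C * u w" if "w \<in> ball x r" for w
    using Lap_u[of w] nonneg[of w] C(2)[of w] ball_S that mult_right_mono[of "A w" C "u w"]
    by force
  have "y \<in> S" "u y = 0"
    using y R(2) by (auto simp: Z_def)
  have "0 < frechet_derivative u (at y) (x - y)"
    by (rule hopf_lemma[OF S u \<open>0 < r\<close> ball_S _ pos _ Lap_le])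
      (use ball_S nonneg C(1) in \<open>auto simp: r_def \<open>u y = 0\<close>\<close>)
  moreover have "frechet_derivative u (at y) = (\<lambda>h. 0)"
    using frechet_derivative_at_min[OF S \<open>y \<in> S\<close>] u nonneg \<open>y \<in> S\<close> \<open>u y = 0\<close>
    by (simp add: twice_differentiable_on_def)
  ultimately show False
    by simp
qed

lemma strong_minimum_principle:
  fixes u A :: "complex \<Rightarrow> real"
  assumes S: "open S" "connected S" and u: "twice_differentiable_on S u"
    and nonneg: "\<And>z. z \<in> S \<Longrightarrow> 0 \<le> u z"
    and A: "continuous_on S A" and Lap_u: "\<And>z. z \<in> S \<Longrightarrow> Lap u z \<le> A z * u z"
    and p: "p \<in> S" "u p = 0" and z: "z \<in> S"
  shows "u z = 0"
proof -
  let ?Z = "{z \<in> S. u z = 0}"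
  have "open ?Z"
    unfolding open_subopen[of ?Z]
  proof
    fix z0 assume "z0 \<in> ?Z"
    then obtain R where R: "0 < R" "cball z0 R \<subseteq> S"
      using S(1) open_contains_cball by blast
    have "ball z0 (R/2) \<subseteq> ?Z"
      using vanishes_on_half_ball[OF S(1) u nonneg A Lap_u R] \<open>z0 \<in> ?Z\<close> R by fastforce
    then show "\<exists>T. open T \<and> z0 \<in> T \<and> T \<subseteq> ?Z"
      using R(1) by (intro exI[of _ "ball z0 (R/2)"]) auto
  qed
  then have "openin (top_of_set S) ?Z"
    by (simp add: openin_open_eq[OF S(1)])
  moreover have "closedin (top_of_set S) ?Z"
    by (rule continuous_closedin_preimage_constant[OF twice_differentiable_on_imp_continuous_on[OF u]])
  ultimately have "?Z = {} \<or> ?Z = S"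
    using S(2) unfolding connected_clopen by blast
  then show ?thesis
    using p z by auto
qed

section \<open>The hyperbolic plane and cocompact Fuchsian groups\<close>

lemma open_upper_half: "open upper_half"
  unfolding upper_half_def using open_halfspace_Im_gt[of 0] by simp

lemma connected_upper_half: "connected upper_half"
  unfolding upper_half_def using convex_connected[OF convex_halfspace_Im_gt[of 0]] by simp

lemma g0_pos: "z \<in> upper_half \<Longrightarrow> 0 < g0 z"
  unfolding upper_half_def g0_def by simp

lemma continuous_on_g0: "continuous_on upper_half g0"
  unfolding g0_def upper_half_def by (intro continuous_intros) auto

lemma C2_on_imp_twice_differentiable_on: "C2_on S f \<Longrightarrow> twice_differentiable_on S f"
  unfolding C2_on_def twice_differentiable_on_def by blast

lemma
  shows twice_differentiable_on_ln_g0: "twice_differentiable_on upper_half (\<lambda>z. ln (g0 z))"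
    and Lap_ln_g0: "z \<in> upper_half \<Longrightarrow> Lap (\<lambda>z. ln (g0 z)) z = g0 z"
proof -
  define f where "f w = - ln 2 - 2 * ln (Im w)" for w :: complex
  have f_eq: "f w = ln (g0 w)" if "w \<in> upper_half" for w
    using that unfolding f_def g0_def upper_half_def by (simp add: ln_div ln_mult ln_realpow)
  have "(f has_derivative (\<lambda>h. - 2 * Im h / Im w)) (at w)"
    "((\<lambda>w. - 2 / Im w) has_derivative (\<lambda>h. 2 * Im h / (Im w)\<^sup>2)) (at w)"
    if "w \<in> upper_half" for w
    using that unfolding f_def upper_half_def
    by (auto intro!: derivative_eq_intros simp: field_simps power2_eq_square)
  note L = Lap_from_derivatives[OF open_upper_half this(1) has_derivative_const this(2)]
  have f: "twice_differentiable_on upper_half f"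
    by (rule L(1)) simp_all
  then show "twice_differentiable_on upper_half (\<lambda>z. ln (g0 z))"
    by (rule twice_differentiable_on_cong_open[OF open_upper_half _ f_eq])
  assume z: "z \<in> upper_half"
  have "Lap (\<lambda>z. ln (g0 z)) z = Lap f z"
    using Lap_cong_open[OF open_upper_half z f_eq] by simp
  also have "\<dots> = g0 z"
    using L(2)[where z=z] z by (simp add: g0_def)
  finally show "Lap (\<lambda>z. ln (g0 z)) z = g0 z" .
qed

lemma
  assumes det: "case g of (a, b, c, d) \<Rightarrow> a * d - b * c = 1" and z: "0 < Im z"
  shows jfac_nonzero: "jfac g z \<noteq> 0"
    and Im_mob: "Im (mob g z) = Im z / (cmod (jfac g z))\<^sup>2"
proof -
  obtain a b c d where g: "g = (a, b, c, d)"
    by (cases g) auto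
  have det': "a * d - b * c = 1"
    using det g by simp
  show "jfac g z \<noteq> 0"
  proof
    assume "jfac g z = 0"
    then have "Im (of_real c * z + of_real d) = 0" "Re (of_real c * z + of_real d) = 0"
      unfolding g jfac_def by simp_all
    then have "c * Im z = 0" "c * Re z + d = 0"
      by simp_all
    then show False
      using z det' by auto
  qed
  have "Im (mob g z) = (Im (of_real a * z + of_real b) * Re (of_real c * z + of_real d)
      - Re (of_real a * z + of_real b) * Im (of_real c * z + of_real d)) / (cmod (jfac g z))\<^sup>2"
    unfolding g mob_def jfac_def by (simp only: prod.case Im_divide')
  also have "\<dots> = (a * d - b * c) * Im z / (cmod (jfac g z))\<^sup>2"
    by (simp add: algebra_simps)
  finally show "Im (mob g z) = Im z / (cmod (jfac g z))\<^sup>2"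
    using det' by simp
qed

lemma equivariant_density_g0:
  assumes "cocompact_fuchsian G"
  shows "equivariant_density G 2 g0"
  unfolding equivariant_density_def
proof (intro ballI)
  fix g z assume "g \<in> G" "z \<in> upper_half"
  then have det: "case g of (a, b, c, d) \<Rightarrow> a * d - b * c = 1" and z: "0 < Im z"
    using assms by (auto simp: cocompact_fuchsian_def upper_half_def)
  have "0 < cmod (jfac g z)"
    using jfac_nonzero[OF det z] by simp
  then show "g0 (mob g z) = cmod (jfac g z) powr (2 * real_of_int 2) * g0 z"
    using z unfolding g0_def Im_mob[OF det z]
    by (simp add: powr_realpow[symmetric] field_simps power2_eq_square power4_eq_xxxx)
qed

lemma equivariant_density_divide:
  assumes "equivariant_density G e f" "equivariant_density G e' f'"
  shows "equivariant_density G (e - e') (\<lambda>z. f z / f' z)"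
  using assms unfolding equivariant_density_def
  by (simp add: powr_diff algebra_simps)

lemma equivariant_density_inverse_square:
  assumes "equivariant_density G e f"
  shows "equivariant_density G (- 2 * e) (\<lambda>z. 1 / (f z)\<^sup>2)"
  using assms unfolding equivariant_density_def
  by (simp add: powr_minus_divide powr_add[symmetric] power2_eq_square algebra_simps)

lemma cocompact_fuchsian_attains_min:
  fixes f :: "complex \<Rightarrow> real"
  assumes G: "cocompact_fuchsian G" and f: "continuous_on upper_half f" "equivariant_density G 0 f"
  obtains p where "p \<in> upper_half" "\<And>z. z \<in> upper_half \<Longrightarrow> f p \<le> f z"
proof -
  obtain K where K: "compact K" "K \<subseteq> upper_half" "\<And>z. z \<in> upper_half \<Longrightarrow> \<exists>g\<in>G. mob g z \<in> K"
    using G unfolding cocompact_fuchsian_def by metis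
  have invariant: "f (mob g z) = f z" if "g \<in> G" "z \<in> upper_half" for g z
  proof -
    have "case g of (a, b, c, d) \<Rightarrow> a * d - b * c = 1" "0 < Im z"
      using G that by (auto simp: cocompact_fuchsian_def upper_half_def)
    then show ?thesis
      using f(2) that jfac_nonzero by (simp add: equivariant_density_def)
  qed
  have "\<i> \<in> upper_half"
    by (simp add: upper_half_def)
  then have "K \<noteq> {}"
    using K(3) by blast
  then obtain p where p: "p \<in> K" "\<And>w. w \<in> K \<Longrightarrow> f p \<le> f w"
    using continuous_attains_inf[OF K(1) _ continuous_on_subset[OF f(1) K(2)]] by blast
  show ?thesis
  proof (rule that)
    show "p \<in> upper_half"
      using p(1) K(2) by blast
    fix z assume "z \<in> upper_half"
    then obtain g where "g \<in> G" "mob g z \<in> K"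
      using K(3) by blast
    then show "f p \<le> f z"
      using p(2) invariant[OF \<open>g \<in> G\<close> \<open>z \<in> upper_half\<close>] by fastforce
  qed
qed

section \<open>A comparison principle for the Toda system of type \<open>C\<^sub>m\<close>\<close>

text \<open>The unique solution of \<open>2 c\<^sub>j - c\<^sub>j\<^sub>+\<^sub>1 - c\<^sub>j\<^sub>-\<^sub>1 = 1\<close> with \<open>c\<^sub>0 = 0\<close> and
  \<open>c\<^sub>m\<^sub>+\<^sub>1 = c\<^sub>m\<^sub>-\<^sub>1\<close>, i.e. the solution of the Toda system with \<open>a\<^sub>j = c\<^sub>j g\<close>.\<close>
definition toda_coeff :: "nat \<Rightarrow> nat \<Rightarrow> real" where
  "toda_coeff m j = real j * real m - (real j)\<^sup>2 / 2"

lemma toda_coeff_0 [simp]: "toda_coeff m 0 = 0"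
  by (simp add: toda_coeff_def)

lemma toda_coeff_pos: "1 \<le> j \<Longrightarrow> j \<le> m \<Longrightarrow> 0 < toda_coeff m j"
  unfolding toda_coeff_def power2_eq_square by (simp add: algebra_simps mult_strict_left_mono)

lemma toda_coeff_second_difference:
  "1 \<le> j \<Longrightarrow> toda_coeff m (j + 1) + toda_coeff m (j - 1) = 2 * toda_coeff m j - 1"
  unfolding toda_coeff_def by (simp add: power2_eq_square field_simps)

lemma toda_coeff_reflect: "1 \<le> m \<Longrightarrow> toda_coeff m (Suc m) = toda_coeff m (m - 1)"
  unfolding toda_coeff_def by (simp add: power2_eq_square field_simps)

text \<open>The convention \<open>a\<^sub>m\<^sub>+\<^sub>1 = a\<^sub>m\<^sub>-\<^sub>1\<close> encodes the doubled entry of the Cartan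
  matrix of type \<open>C\<^sub>m\<close>; \<open>g\<close> is a metric of curvature \<open>-1\<close>.\<close>
locale toda_system =
  fixes S :: "complex set" and g :: "complex \<Rightarrow> real" and m :: nat
    and a :: "nat \<Rightarrow> complex \<Rightarrow> real"
  assumes open_S: "open S" and connected_S: "connected S"
    and g_pos: "\<And>z. z \<in> S \<Longrightarrow> 0 < g z"
    and ln_g: "twice_differentiable_on S (\<lambda>z. ln (g z))"
    and Lap_ln_g: "\<And>z. z \<in> S \<Longrightarrow> Lap (\<lambda>z. ln (g z)) z = g z"
    and a0_nonneg: "\<And>z. z \<in> S \<Longrightarrow> 0 \<le> a 0 z"
    and a_pos: "\<And>j z. 1 \<le> j \<Longrightarrow> j \<le> m \<Longrightarrow> z \<in> S \<Longrightarrow> 0 < a j z"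
    and a_reflect: "a (Suc m) = a (m - 1)"
    and ln_a: "\<And>j. 1 \<le> j \<Longrightarrow> j \<le> m \<Longrightarrow> twice_differentiable_on S (\<lambda>z. ln (a j z))"
    and Lap_ln_a: "\<And>j z. 1 \<le> j \<Longrightarrow> j \<le> m \<Longrightarrow> z \<in> S \<Longrightarrow>
      Lap (\<lambda>z. ln (a j z)) z = 2 * a j z - a (j + 1) z - a (j - 1) z"
    and ratio_attains_min: "\<And>j. 1 \<le> j \<Longrightarrow> j \<le> m \<Longrightarrow> \<exists>p\<in>S. \<forall>z\<in>S. a j p / g p \<le> a j z / g z"
begin

definition ratio :: "nat \<Rightarrow> complex \<Rightarrow> real" where
  "ratio j z = a j z / (toda_coeff m j * g z)"

lemma ratio_pos: "1 \<le> j \<Longrightarrow> j \<le> m \<Longrightarrow> z \<in> S \<Longrightarrow> 0 < ratio j z"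
  unfolding ratio_def using a_pos toda_coeff_pos g_pos by simp

lemma a_eq_ratio: "1 \<le> j \<Longrightarrow> j \<le> m \<Longrightarrow> z \<in> S \<Longrightarrow> a j z = toda_coeff m j * g z * ratio j z"
  unfolding ratio_def using toda_coeff_pos[of j m] g_pos[of z] by simp

lemma ratio_eq_1_iff:
  "1 \<le> j \<Longrightarrow> j \<le> m \<Longrightarrow> z \<in> S \<Longrightarrow> ratio j z = 1 \<longleftrightarrow> a j z = toda_coeff m j * g z"
  unfolding ratio_def using toda_coeff_pos[of j m] g_pos[of z] by auto

lemma
  assumes j: "1 \<le> j" "j \<le> m"
  shows twice_differentiable_on_ln_ratio: "twice_differentiable_on S (\<lambda>z. ln (ratio j z))"
    and Lap_ln_ratio: "z \<in> S \<Longrightarrow>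
      Lap (\<lambda>z. ln (ratio j z)) z = 2 * a j z - a (j + 1) z - a (j - 1) z - g z"
proof -
  have ln_ratio: "ln (ratio j z) = ((- 1) * ln (g z) + ln (a j z)) + - ln (toda_coeff m j)"
    if "z \<in> S" for z
  proof -
    have "0 < a j z" "0 < g z" "0 < toda_coeff m j"
      using a_pos[OF j that] g_pos[OF that] toda_coeff_pos[OF j] by simp_all
    then show ?thesis
      by (simp add: ratio_def ln_div ln_mult)
  qed
  note lincomb = twice_differentiable_on_lincomb[OF open_S ln_g ln_a[OF j]]
  have "twice_differentiable_on S (\<lambda>z. ((- 1) * ln (g z) + ln (a j z)) + - ln (toda_coeff m j))"
    unfolding twice_differentiable_on_add_const by (rule lincomb)
  then show "twice_differentiable_on S (\<lambda>z. ln (ratio j z))"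
    by (rule twice_differentiable_on_cong_open[OF open_S _ ln_ratio[symmetric]])
  assume z: "z \<in> S"
  have "Lap (\<lambda>z. ln (ratio j z)) z = Lap (\<lambda>z. ((- 1) * ln (g z) + ln (a j z)) + - ln (toda_coeff m j)) z"
    by (rule Lap_cong_open[OF open_S z ln_ratio])
  then show "Lap (\<lambda>z. ln (ratio j z)) z = 2 * a j z - a (j + 1) z - a (j - 1) z - g z"
    using Lap_lincomb[OF open_S ln_g ln_a[OF j] z] Lap_ln_g[OF z] Lap_ln_a[OF j z]
    by (simp only: Lap_add_const)
qed

lemma Lap_ln_ratio_nonneg_at_min:
  assumes j: "1 \<le> j" "j \<le> m" and z: "z \<in> S" and min: "\<And>w. w \<in> S \<Longrightarrow> ratio j z \<le> ratio j w"
  shows "0 \<le> 2 * a j z - a (j + 1) z - a (j - 1) z - g z"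
proof -
  have "0 \<le> Lap (\<lambda>z. ln (ratio j z)) z"
    by (rule Lap_nonneg_at_min[OF open_S twice_differentiable_on_ln_ratio[OF j] z])
      (use min ratio_pos[OF j] z in auto)
  then show ?thesis
    using Lap_ln_ratio[OF j z] by simp
qed

lemma scaled_coeff_le_a:
  assumes \<mu>: "0 \<le> \<mu>" "\<And>j. 1 \<le> j \<Longrightarrow> j \<le> m \<Longrightarrow> \<mu> \<le> ratio j z"
    and z: "z \<in> S" and j: "j \<le> Suc m" and m: "1 \<le> m"
  shows "\<mu> * toda_coeff m j * g z \<le> a j z"
proof -
  have mid: "\<mu> * toda_coeff m i * g z \<le> a i z" if "1 \<le> i" "i \<le> m" for i
    using \<mu>(2)[OF that] a_eq_ratio[OF that z] toda_coeff_pos[OF that] g_pos[OF z]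
    by (simp add: mult_left_mono)
  consider "j = 0" | "1 \<le> j" "j \<le> m" | "j = Suc m"
    using j by linarith
  then show ?thesis
  proof cases
    case 1
    then show ?thesis
      using a0_nonneg[OF z] by simp
  next
    case 2
    then show ?thesis
      by (rule mid)
  next
    case 3
    show ?thesis
    proof (cases "m = 1")
      case True
      then show ?thesis
        using 3 a_reflect a0_nonneg[OF z] toda_coeff_reflect[OF m] by simp
    next
      case False
      then show ?thesis
        using 3 a_reflect mid[of "m - 1"] m toda_coeff_reflect[OF m] by simp
    qed
  qed
qed

lemma neighbour_sum_ge:
  assumes \<mu>: "0 \<le> \<mu>" "\<And>j. 1 \<le> j \<Longrightarrow> j \<le> m \<Longrightarrow> \<mu> \<le> ratio j z"
    and z: "z \<in> S" and k: "1 \<le> k" "k \<le> m"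
  shows "\<mu> * (2 * toda_coeff m k - 1) * g z \<le> a (k + 1) z + a (k - 1) z"
proof -
  have "\<mu> * toda_coeff m (k + 1) * g z \<le> a (k + 1) z" "\<mu> * toda_coeff m (k - 1) * g z \<le> a (k - 1) z"
    by (rule scaled_coeff_le_a[OF \<mu> z]; use k in simp)+
  moreover have "\<mu> * (2 * toda_coeff m k - 1) * g z =
      \<mu> * toda_coeff m (k + 1) * g z + \<mu> * toda_coeff m (k - 1) * g z"
    by (simp only: toda_coeff_second_difference[OF k(1), symmetric]) (simp add: algebra_simps)
  ultimately show ?thesis
    by linarith
qed

lemma ratio_attains_overall_min:
  assumes "1 \<le> m"
  obtains k p where "1 \<le> k" "k \<le> m" "p \<in> S"
    "\<And>j w. 1 \<le> j \<Longrightarrow> j \<le> m \<Longrightarrow> w \<in> S \<Longrightarrow> ratio k p \<le> ratio j w"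
proof -
  have ex: "\<forall>i\<in>{1..m}. \<exists>p. p \<in> S \<and> (\<forall>w\<in>S. ratio i p \<le> ratio i w)"
  proof
    fix i assume "i \<in> {1..m}"
    then have i: "1 \<le> i" "i \<le> m"
      by auto
    then obtain p where p: "p \<in> S" "\<And>w. w \<in> S \<Longrightarrow> a i p / g p \<le> a i w / g w"
      using ratio_attains_min by blast
    have "ratio i p \<le> ratio i w" if "w \<in> S" for w
      using divide_right_mono[OF p(2)[OF that] less_imp_le[OF toda_coeff_pos[OF i]]]
      by (simp add: ratio_def mult.commute)
    then show "\<exists>p. p \<in> S \<and> (\<forall>w\<in>S. ratio i p \<le> ratio i w)"
      using p(1) by blast
  qed
  obtain p where p: "\<forall>i\<in>{1..m}. p i \<in> S \<and> (\<forall>w\<in>S. ratio i (p i) \<le> ratio i w)"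
    using bchoice[OF ex] by blast
  have "Min ((\<lambda>i. ratio i (p i)) ` {1..m}) \<in> (\<lambda>i. ratio i (p i)) ` {1..m}"
    by (rule Min_in) (use assms in auto)
  then obtain k where k: "1 \<le> k" "k \<le> m" "Min ((\<lambda>i. ratio i (p i)) ` {1..m}) = ratio k (p k)"
    by auto
  show ?thesis
  proof (rule that[OF k(1,2)])
    show "p k \<in> S"
      using p k(1,2) by auto
    fix j w assume "1 \<le> j" "j \<le> m" "w \<in> S"
    then have "ratio k (p k) \<le> ratio j (p j)"
      unfolding k(3)[symmetric] by (intro Min_le) auto
    also have "\<dots> \<le> ratio j w"
      using p \<open>1 \<le> j\<close> \<open>j \<le> m\<close> \<open>w \<in> S\<close> by auto
    finally show "ratio k (p k) \<le> ratio j w" .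
  qed
qed

text \<open>At the overall minimum \<open>\<mu>\<close> of the ratios, the minimum principle for \<open>ln (ratio k)\<close>
  forces \<open>(\<mu> - 1) g \<ge> 0\<close>.\<close>
lemma ratio_ge_1:
  assumes j: "1 \<le> j" "j \<le> m" and z: "z \<in> S"
  shows "1 \<le> ratio j z"
proof -
  obtain k p where k: "1 \<le> k" "k \<le> m" and p: "p \<in> S"
    and min: "\<And>j w. 1 \<le> j \<Longrightarrow> j \<le> m \<Longrightarrow> w \<in> S \<Longrightarrow> ratio k p \<le> ratio j w"
    using ratio_attains_overall_min[OF order_trans[OF j]] by blast
  define \<mu> where "\<mu> = ratio k p"
  have "0 \<le> \<mu>"
    using ratio_pos[OF k p] by (simp add: \<mu>_def)
  have "0 \<le> 2 * a k p - a (k + 1) p - a (k - 1) p - g p"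
    by (rule Lap_ln_ratio_nonneg_at_min[OF k p min[OF k]])
  moreover have "\<mu> * (2 * toda_coeff m k - 1) * g p \<le> a (k + 1) p + a (k - 1) p"
    by (rule neighbour_sum_ge[OF \<open>0 \<le> \<mu>\<close> _ p k]) (use min p in \<open>simp add: \<mu>_def\<close>)
  moreover have "a k p = toda_coeff m k * g p * \<mu>"
    using a_eq_ratio[OF k p] by (simp add: \<mu>_def)
  moreover have "2 * (toda_coeff m k * g p * \<mu>) - \<mu> * (2 * toda_coeff m k - 1) * g p = g p * \<mu>"
    by (simp add: algebra_simps)
  ultimately have "g p * 1 \<le> g p * \<mu>"
    by linarith
  then show ?thesis
    using min[OF j z] g_pos[OF p] by (simp add: \<mu>_def)
qed

theorem toda_coeff_le:
  assumes "j \<le> Suc m" "1 \<le> m" "z \<in> S"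
  shows "toda_coeff m j * g z \<le> a j z"
  using scaled_coeff_le_a[of 1 z j] ratio_ge_1 assms by simp

lemma continuous_on_a: "1 \<le> j \<Longrightarrow> j \<le> m \<Longrightarrow> continuous_on S (a j)"
  using continuous_on_of_ln[OF ln_a a_pos] by blast

lemma Lap_ln_ratio_le:
  assumes k: "1 \<le> k" "k \<le> m" and w: "w \<in> S"
  shows "Lap (\<lambda>w. ln (ratio k w)) w \<le> 2 * a k w * ln (ratio k w)"
proof -
  define R where "R = ratio k w"
  have R: "0 < R" "a k w = toda_coeff m k * g w * R"
    using ratio_pos[OF k w] a_eq_ratio[OF k w] by (simp_all add: R_def)
  have "1 * (2 * toda_coeff m k - 1) * g w \<le> a (k + 1) w + a (k - 1) w"
    by (rule neighbour_sum_ge[OF _ _ w k]) (use ratio_ge_1 w in auto)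
  then have "Lap (\<lambda>w. ln (ratio k w)) w \<le> 2 * (a k w - toda_coeff m k * g w)"
    using Lap_ln_ratio[OF k w] by (simp add: algebra_simps)
  also have "\<dots> = 2 * a k w * (1 - 1 / R)"
    using R toda_coeff_pos[OF k] g_pos[OF w] by (simp add: field_simps)
  also have "\<dots> \<le> 2 * a k w * ln R"
  proof -
    have "1 - 1 / R \<le> ln R"
      using ln_le_minus_one[of "1 / R"] R(1) by (simp add: ln_div)
    then show ?thesis
      using a_pos[OF k w] by simp
  qed
  finally show ?thesis
    by (simp add: R_def)
qed

lemma eq_toda_coeff_everywhere:
  assumes k: "1 \<le> k" "k \<le> m" and z0: "z0 \<in> S" "a k z0 = toda_coeff m k * g z0" and z: "z \<in> S"
  shows "a k z = toda_coeff m k * g z"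
proof -
  have "ln (ratio k z) = 0"
  proof (rule strong_minimum_principle[OF open_S connected_S twice_differentiable_on_ln_ratio[OF k]
        _ _ Lap_ln_ratio_le[OF k]])
    show "0 \<le> ln (ratio k w)" if "w \<in> S" for w
      using ratio_ge_1[OF k that] by simp
    show "continuous_on S (\<lambda>w. 2 * a k w)"
      using continuous_on_a[OF k] by (intro continuous_intros)
    show "z0 \<in> S" "ln (ratio k z0) = 0"
      using z0 ratio_eq_1_iff[OF k z0(1)] by simp_all
  qed (use z in auto)
  then show ?thesis
    using ratio_pos[OF k z] ratio_eq_1_iff[OF k z] by simp
qed

lemma eq_toda_coeff_pred:
  assumes k: "1 \<le> k" "k \<le> m" and eq: "\<And>w. w \<in> S \<Longrightarrow> a k w = toda_coeff m k * g w" and z: "z \<in> S"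
  shows "a (k - 1) z = toda_coeff m (k - 1) * g z"
proof -
  have "ratio k z = 1"
    using ratio_eq_1_iff[OF k z] eq[OF z] by simp
  then have "0 \<le> 2 * a k z - a (k + 1) z - a (k - 1) z - g z"
    by (intro Lap_ln_ratio_nonneg_at_min[OF k z]) (simp add: ratio_ge_1[OF k])
  moreover have "toda_coeff m (k + 1) * g z \<le> a (k + 1) z" "toda_coeff m (k - 1) * g z \<le> a (k - 1) z"
    by (rule toda_coeff_le; use k z in simp)+
  moreover have "2 * (toda_coeff m k * g z) = g z + toda_coeff m (k + 1) * g z + toda_coeff m (k - 1) * g z"
  proof -
    have "2 * toda_coeff m k = 1 + toda_coeff m (k + 1) + toda_coeff m (k - 1)"
      using toda_coeff_second_difference[OF k(1), of m] by linarith
    then have "(2 * toda_coeff m k) * g z = (1 + toda_coeff m (k + 1) + toda_coeff m (k - 1)) * g z"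
      by (rule arg_cong)
    then show ?thesis
      by (simp add: algebra_simps)
  qed
  ultimately show ?thesis
    using eq[OF z] by linarith
qed

theorem a0_vanishes:
  assumes k: "1 \<le> k" "k \<le> m" and z0: "z0 \<in> S" "a k z0 = toda_coeff m k * g z0" and z: "z \<in> S"
  shows "a 0 z = 0"
proof -
  have "\<forall>w\<in>S. a (k - i) w = toda_coeff m (k - i) * g w" for i
  proof (induction i)
    case 0
    then show ?case
      using eq_toda_coeff_everywhere[OF k z0] by simp
  next
    case (Suc i)
    show ?case
    proof (cases "k - i = 0")
      case True
      then show ?thesis
        using Suc.IH by simp
    next
      case False
      then have "1 \<le> k - i" "k - i \<le> m"
        using k by auto
      then have "a (k - i - 1) w = toda_coeff m (k - i - 1) * g w" if "w \<in> S" for w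
        by (rule eq_toda_coeff_pred) (use Suc.IH that in auto)
      moreover have "k - Suc i = k - i - 1"
        by simp
      ultimately show ?thesis
        by (metis (no_types))
    qed
  qed
  from this[of k] show ?thesis
    using z by simp
qed

end

section \<open>Solutions of the Hitchin equations for the cyclic Higgs bundle\<close>

locale cyclic_toda_solution =
  fixes G :: "(real \<times> real \<times> real \<times> real) set" and m n :: nat
    and q :: "complex \<Rightarrow> complex" and h :: "nat \<Rightarrow> complex \<Rightarrow> real"
  assumes G: "cocompact_fuchsian G"
    and m2: "2 \<le> m" and n_def: "n = 2 * m"
    and h_pos: "\<And>k z. 1 \<le> k \<Longrightarrow> k \<le> m \<Longrightarrow> z \<in> upper_half \<Longrightarrow> 0 < h k z"
    and h_C2: "\<And>k. 1 \<le> k \<Longrightarrow> k \<le> m \<Longrightarrow> C2_on upper_half (h k)"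
    and h_equiv: "\<And>k. 1 \<le> k \<Longrightarrow> k \<le> m \<Longrightarrow>
        equivariant_density G (2 * int k - int n - 1) (h k)"
    and eq1: "\<And>z. z \<in> upper_half \<Longrightarrow>
        Lap (\<lambda>w. ln (h 1 w)) z + h 2 z / h 1 z - (h 1 z)^2 * (cmod (q z))^2 = 0"
    and eqk: "\<And>k z. 2 \<le> k \<Longrightarrow> k \<le> m - 1 \<Longrightarrow> z \<in> upper_half \<Longrightarrow>
        Lap (\<lambda>w. ln (h k w)) z + h (k+1) z / h k z - h k z / h (k-1) z = 0"
    and eqm: "\<And>z. z \<in> upper_half \<Longrightarrow>
        Lap (\<lambda>w. ln (h m w)) z + 1 / (h m z)^2 - h m z / h (m-1) z = 0"
begin

text \<open>The last clause realises the convention \<open>a\<^sub>m\<^sub>+\<^sub>1 = a\<^sub>m\<^sub>-\<^sub>1\<close> of \<open>toda_system\<close>.\<close>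
definition toda_weight :: "nat \<Rightarrow> complex \<Rightarrow> real" where
  "toda_weight j z =
     (if j = 0 then (h 1 z)\<^sup>2 * (cmod (q z))\<^sup>2
      else if j < m then h (j + 1) z / h j z
      else if j = m then 1 / (h m z)\<^sup>2
      else h m z / h (m - 1) z)"

lemma toda_weight_mid: "1 \<le> j \<Longrightarrow> j < m \<Longrightarrow> toda_weight j = (\<lambda>z. h (j + 1) z / h j z)"
  by (auto simp: toda_weight_def fun_eq_iff)

lemma toda_weight_top: "toda_weight m = (\<lambda>z. 1 / (h m z)\<^sup>2)"
  using m2 by (auto simp: toda_weight_def fun_eq_iff)

lemma toda_weight_reflect: "toda_weight (Suc m) = toda_weight (m - 1)"
  using m2 by (auto simp: toda_weight_def fun_eq_iff)

lemma toda_weight_pos: "1 \<le> j \<Longrightarrow> j \<le> m \<Longrightarrow> z \<in> upper_half \<Longrightarrow> 0 < toda_weight j z"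
  using h_pos[of j z] h_pos[of "j + 1" z] h_pos[of m z] by (auto simp: toda_weight_def)

lemma ln_h: "1 \<le> k \<Longrightarrow> k \<le> m \<Longrightarrow> twice_differentiable_on upper_half (\<lambda>z. ln (h k z))"
  using twice_differentiable_on_ln[OF open_upper_half C2_on_imp_twice_differentiable_on[OF h_C2]] h_pos
  by blast

lemma Lap_ln_h:
  assumes k: "1 \<le> k" "k \<le> m" and z: "z \<in> upper_half"
  shows "Lap (\<lambda>w. ln (h k w)) z = toda_weight (k - 1) z - toda_weight k z"
proof -
  consider "k = 1" | "k = m" | "2 \<le> k" "k \<le> m - 1"
    using k by linarith
  then show ?thesis
  proof cases
    case 1
    then show ?thesis
      using eq1[OF z] toda_weight_mid[of 1] m2 by (simp add: toda_weight_def numeral_2_eq_2)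
  next
    case 2
    then show ?thesis
      using eqm[OF z] toda_weight_mid[of "m - 1"] toda_weight_top m2 by simp
  next
    case 3
    then show ?thesis
      using eqk[OF 3 z] toda_weight_mid[of "k - 1"] toda_weight_mid[of k] by simp
  qed
qed

lemma
  assumes j: "1 \<le> j" "j < m"
  shows ln_toda_weight_below_top: "twice_differentiable_on upper_half (\<lambda>z. ln (toda_weight j z))"
    and Lap_ln_toda_weight_below_top: "z \<in> upper_half \<Longrightarrow> Lap (\<lambda>z. ln (toda_weight j z)) z =
      2 * toda_weight j z - toda_weight (j + 1) z - toda_weight (j - 1) z"
proof -
  have ln_eq: "ln (toda_weight j w) = (- 1) * ln (h j w) + ln (h (j + 1) w)" if "w \<in> upper_half" for w
    using h_pos[of j w] h_pos[of "j + 1" w] that j by (simp add: toda_weight_mid ln_div)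
  have "twice_differentiable_on upper_half (\<lambda>w. (- 1) * ln (h j w) + ln (h (j + 1) w))"
    by (rule twice_differentiable_on_lincomb[OF open_upper_half ln_h ln_h]) (use j in auto)
  then show "twice_differentiable_on upper_half (\<lambda>z. ln (toda_weight j z))"
    by (rule twice_differentiable_on_cong_open[OF open_upper_half _ ln_eq[symmetric]])
  assume z: "z \<in> upper_half"
  have "Lap (\<lambda>z. ln (toda_weight j z)) z = Lap (\<lambda>w. (- 1) * ln (h j w) + ln (h (j + 1) w)) z"
    by (rule Lap_cong_open[OF open_upper_half z ln_eq])
  also have "\<dots> = (- 1) * Lap (\<lambda>w. ln (h j w)) z + Lap (\<lambda>w. ln (h (j + 1) w)) z"
    by (rule Lap_lincomb[OF open_upper_half ln_h ln_h z]) (use j in auto)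
  finally show "Lap (\<lambda>z. ln (toda_weight j z)) z =
      2 * toda_weight j z - toda_weight (j + 1) z - toda_weight (j - 1) z"
    using Lap_ln_h[of j z] Lap_ln_h[of "j + 1" z] z j by simp
qed

lemma
  shows ln_toda_weight_top: "twice_differentiable_on upper_half (\<lambda>z. ln (toda_weight m z))"
    and Lap_ln_toda_weight_top: "z \<in> upper_half \<Longrightarrow> Lap (\<lambda>z. ln (toda_weight m z)) z =
      2 * toda_weight m z - toda_weight (m + 1) z - toda_weight (m - 1) z"
proof -
  have ln_eq: "ln (toda_weight m w) = (- 2) * ln (h m w) + 0" if "w \<in> upper_half" for w
    using h_pos[of m w] that m2 by (simp add: toda_weight_top ln_div ln_realpow)
  have "twice_differentiable_on upper_half (\<lambda>w. (- 2) * ln (h m w) + 0)"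
    by (rule twice_differentiable_on_lincomb[OF open_upper_half ln_h twice_differentiable_on_const])
      (use m2 in auto)
  then show "twice_differentiable_on upper_half (\<lambda>z. ln (toda_weight m z))"
    by (rule twice_differentiable_on_cong_open[OF open_upper_half _ ln_eq[symmetric]])
  assume z: "z \<in> upper_half"
  have "Lap (\<lambda>z. ln (toda_weight m z)) z = Lap (\<lambda>w. (- 2) * ln (h m w) + 0) z"
    by (rule Lap_cong_open[OF open_upper_half z ln_eq])
  also have "\<dots> = (- 2) * Lap (\<lambda>w. ln (h m w)) z + Lap (\<lambda>w. 0) z"
    by (rule Lap_lincomb[OF open_upper_half ln_h twice_differentiable_on_const z]) (use m2 in auto)
  finally show "Lap (\<lambda>z. ln (toda_weight m z)) z =
      2 * toda_weight m z - toda_weight (m + 1) z - toda_weight (m - 1) z"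
    using Lap_ln_h[of m z] toda_weight_reflect z m2 by (simp add: Lap_const)
qed

lemma
  assumes j: "1 \<le> j" "j \<le> m"
  shows ln_toda_weight: "twice_differentiable_on upper_half (\<lambda>z. ln (toda_weight j z))"
    and Lap_ln_toda_weight: "z \<in> upper_half \<Longrightarrow> Lap (\<lambda>z. ln (toda_weight j z)) z =
      2 * toda_weight j z - toda_weight (j + 1) z - toda_weight (j - 1) z"
  using ln_toda_weight_below_top[of j] Lap_ln_toda_weight_below_top[of j z]
    ln_toda_weight_top Lap_ln_toda_weight_top[of z] j
  by (cases "j < m"; force)+

lemma equivariant_density_toda_weight:
  assumes j: "1 \<le> j" "j \<le> m"
  shows "equivariant_density G 2 (toda_weight j)"
proof (cases "j < m")
  case True
  have "equivariant_density G ((2 * int (j + 1) - int n - 1) - (2 * int j - int n - 1))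
      (\<lambda>z. h (j + 1) z / h j z)"
    by (rule equivariant_density_divide[OF h_equiv h_equiv]) (use j True in auto)
  then show ?thesis
    using j True by (simp add: toda_weight_mid)
next
  case False
  then have "j = m"
    using j by simp
  have "equivariant_density G (- 2 * (2 * int m - int n - 1)) (\<lambda>z. 1 / (h m z)\<^sup>2)"
    using equivariant_density_inverse_square[OF h_equiv] m2 by simp
  then show ?thesis
    using \<open>j = m\<close> n_def by (simp add: toda_weight_top)
qed

sublocale toda_system upper_half g0 m toda_weight
proof
  show "open upper_half" "connected upper_half"
    by (fact open_upper_half connected_upper_half)+
  show "twice_differentiable_on upper_half (\<lambda>z. ln (g0 z))"
    by (fact twice_differentiable_on_ln_g0)
  show "0 < g0 z" "Lap (\<lambda>z. ln (g0 z)) z = g0 z" if "z \<in> upper_half" for z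
    using g0_pos[OF that] Lap_ln_g0[OF that] by simp_all
  show "0 \<le> toda_weight 0 z" for z
    by (simp add: toda_weight_def)
  show "0 < toda_weight j z" if "1 \<le> j" "j \<le> m" "z \<in> upper_half" for j z
    using toda_weight_pos that .
  show "toda_weight (Suc m) = toda_weight (m - 1)"
    by (fact toda_weight_reflect)
  show "twice_differentiable_on upper_half (\<lambda>z. ln (toda_weight j z))" if "1 \<le> j" "j \<le> m" for j
    using ln_toda_weight that .
  show "Lap (\<lambda>z. ln (toda_weight j z)) z = 2 * toda_weight j z - toda_weight (j + 1) z - toda_weight (j - 1) z"
    if "1 \<le> j" "j \<le> m" "z \<in> upper_half" for j z
    using Lap_ln_toda_weight that .
  show "\<exists>p\<in>upper_half. \<forall>z\<in>upper_half. toda_weight j p / g0 p \<le> toda_weight j z / g0 z"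
    if j: "1 \<le> j" "j \<le> m" for j
  proof -
    have "continuous_on upper_half (toda_weight j)"
      by (rule continuous_on_of_ln[OF ln_toda_weight[OF j] toda_weight_pos[OF j]])
    moreover have "\<forall>z\<in>upper_half. g0 z \<noteq> 0"
      using g0_pos by force
    ultimately have cont: "continuous_on upper_half (\<lambda>z. toda_weight j z / g0 z)"
      by (intro continuous_on_divide continuous_on_g0)
    have inv: "equivariant_density G 0 (\<lambda>z. toda_weight j z / g0 z)"
      using equivariant_density_divide[OF equivariant_density_toda_weight[OF j] equivariant_density_g0[OF G]]
      by simp
    obtain p where "p \<in> upper_half" "\<And>z. z \<in> upper_half \<Longrightarrow> toda_weight j p / g0 p \<le> toda_weight j z / g0 z"
      using cocompact_fuchsian_attains_min[OF G cont inv] by blast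
    then show ?thesis
      by blast
  qed
qed

lemma h_ratio_ge:
  assumes "1 \<le> k" "k \<le> m - 1" "z \<in> upper_half"
  shows "(real k * real m - (real k)\<^sup>2 / 2) * g0 z \<le> h (k + 1) z / h k z"
  using toda_coeff_le[of k z] toda_weight_mid[of k] assms m2 by (simp add: toda_coeff_def)

lemma h_top_ge:
  assumes "z \<in> upper_half"
  shows "(real m)\<^sup>2 / 2 * g0 z \<le> 1 / (h m z)\<^sup>2"
  using toda_coeff_le[of m z] toda_weight_top assms m2 by (simp add: toda_coeff_def power2_eq_square)

lemma q_vanishes:
  assumes z0: "z0 \<in> upper_half"
    and eq: "(\<exists>k. 1 \<le> k \<and> k \<le> m - 1 \<and>
        h (k + 1) z0 / h k z0 = (real k * real m - (real k)\<^sup>2 / 2) * g0 z0)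
      \<or> 1 / (h m z0)\<^sup>2 = (real m)\<^sup>2 / 2 * g0 z0"
    and z: "z \<in> upper_half"
  shows "q z = 0"
proof -
  obtain k where k: "1 \<le> k" "k \<le> m" and "toda_weight k z0 = toda_coeff m k * g0 z0"
    using eq
  proof
    assume "\<exists>k. 1 \<le> k \<and> k \<le> m - 1 \<and>
        h (k + 1) z0 / h k z0 = (real k * real m - (real k)\<^sup>2 / 2) * g0 z0"
    then obtain k where "1 \<le> k" "k \<le> m - 1" "h (k + 1) z0 / h k z0 = toda_coeff m k * g0 z0"
      by (auto simp: toda_coeff_def)
    then show ?thesis
      using that[of k] toda_weight_mid[of k] m2 by simp
  next
    assume "1 / (h m z0)\<^sup>2 = (real m)\<^sup>2 / 2 * g0 z0"
    then show ?thesis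
      using that[of m] toda_weight_top m2 by (simp add: toda_coeff_def power2_eq_square)
  qed
  then have "(h 1 z)\<^sup>2 * (cmod (q z))\<^sup>2 = 0"
    using a0_vanishes[OF k z0 _ z] by (simp add: toda_weight_def)
  then show ?thesis
    using h_pos[of 1 z] m2 z by simp
qed

end

theorem mainTheorem2:
  fixes G :: "(real \<times> real \<times> real \<times> real) set"
    and m n :: nat
    and q :: "complex \<Rightarrow> complex"
    and h :: "nat \<Rightarrow> complex \<Rightarrow> real"
  assumes G: "cocompact_fuchsian G"
    and m2: "m \<ge> 2" and n_def: "n = 2 * m"
    and q: "holo_diff G n q"
    and h_pos: "\<And>k z. 1 \<le> k \<Longrightarrow> k \<le> m \<Longrightarrow> z \<in> upper_half \<Longrightarrow> h k z > 0"
    and h_C2: "\<And>k. 1 \<le> k \<Longrightarrow> k \<le> m \<Longrightarrow> C2_on upper_half (h k)"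
    and h_equiv: "\<And>k. 1 \<le> k \<Longrightarrow> k \<le> m \<Longrightarrow>
        equivariant_density G (2 * int k - int n - 1) (h k)"
    and eq1: "\<And>z. z \<in> upper_half \<Longrightarrow>
        Lap (\<lambda>w. ln (h 1 w)) z + h 2 z / h 1 z - (h 1 z)^2 * (cmod (q z))^2 = 0"
    and eqk: "\<And>k z. 2 \<le> k \<Longrightarrow> k \<le> m - 1 \<Longrightarrow> z \<in> upper_half \<Longrightarrow>
        Lap (\<lambda>w. ln (h k w)) z + h (k+1) z / h k z - h k z / h (k-1) z = 0"
    and eqm: "\<And>z. z \<in> upper_half \<Longrightarrow>
        Lap (\<lambda>w. ln (h m w)) z + 1 / (h m z)^2 - h m z / h (m-1) z = 0"
  shows "(\<forall>z\<in>upper_half.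
            (\<forall>k. 1 \<le> k \<and> k \<le> m - 1 \<longrightarrow>
               h (k+1) z / h k z \<ge> (real k * real m - (real k)^2 / 2) * g0 z) \<and>
            1 / (h m z)^2 \<ge> (real m)^2 / 2 * g0 z)
       \<and> ((\<exists>z\<in>upper_half.
            (\<exists>k. 1 \<le> k \<and> k \<le> m - 1 \<and>
               h (k+1) z / h k z = (real k * real m - (real k)^2 / 2) * g0 z) \<or>
            1 / (h m z)^2 = (real m)^2 / 2 * g0 z)
          \<longrightarrow> (\<forall>z\<in>upper_half. q z = 0))"
proof -
  interpret cyclic_toda_solution G m n q h
    by unfold_locales (fact G m2 n_def h_pos h_C2 h_equiv eq1 eqk eqm)+
  show ?thesis
  proof (intro conjI ballI allI impI)
    fix z k assume "z \<in> upper_half" "1 \<le> k \<and> k \<le> m - 1"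
    then show "h (k + 1) z / h k z \<ge> (real k * real m - (real k)\<^sup>2 / 2) * g0 z"
      using h_ratio_ge by blast
  next
    fix z assume "z \<in> upper_half"
    then show "1 / (h m z)\<^sup>2 \<ge> (real m)\<^sup>2 / 2 * g0 z"
      by (rule h_top_ge)
  next
    fix z assume z: "z \<in> upper_half"
    assume "\<exists>z\<in>upper_half. (\<exists>k. 1 \<le> k \<and> k \<le> m - 1 \<and>
        h (k + 1) z / h k z = (real k * real m - (real k)\<^sup>2 / 2) * g0 z) \<or>
      1 / (h m z)\<^sup>2 = (real m)\<^sup>2 / 2 * g0 z"
    then show "q z = 0"
      using q_vanishes z by blast
  qed
qed

end
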